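(* Let $d\ge1$, let $P\subseteq[-1,1]^d$ be a convex $d$-dimensional polytope containing the origin, let $\alpha\le 1$ be a constant, and let $\mathcal{A}$ be an algorithm such that for every $\vec{w}\in\mathbb{R}^d$, $\mathcal{A}(\vec{w})\in P$ and $\mathcal{A}(\vec{w})\cdot\vec{w}\ge\alpha\cdot\max_{\vec{x}\in P}\vec{x}\cdot\vec{w}$. Let $P_1=\{\vec{\pi} : \vec{\pi}\cdot\vec{w}\le\mathcal{A}(\vec{w})\cdot\vec{w}\ \forall\vec{w}\in[-1,1]^d\}$, and let $WSO$ be the weird separation oracle defined (with arbitrary parameters $N\in\mathbb{N}$, $\delta>0$) as in the context. Consider an execution of the ellipsoid algorithm using $WSO$ (possibly together with additional variables and constraints), and let $Q$ be the polytope defined by the intersection of the halfspaces output by $WSO$ during this execution. Then during the entire execution, $P_1\subseteq Q$.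
   Context: "Running the ellipsoid algorithm with a weird separation oracle" (an algorithm which on input $\vec{x}$ outputs either "yes" or a hyperplane violated by $\vec{x}$, the set of accepted points not necessarily being convex) means: start from a suitable initial ellipsoid; query the oracle on the center of the current ellipsoid; if accepted, output it as a feasible point; otherwise update the ellipsoid using the returned violated hyperplane as in the standard ellipsoid algorithm; repeat for a predetermined number $N$ of iterations, and if no feasible point is found, output "infeasible". The oracle $WSO$, on input $\vec{\pi}\in\mathbb{R}^d$, runs the ellipsoid algorithm for $N$ iterations on the following problem in the variables $(\vec{w},t)$: constraints $\vec{w}\in[-1,1]^d$; $t-\vec{\pi}\cdot\vec{w}\le-\delta$; and the weird oracle $\widehat{WSO}(\vec{w},t)$, which answers "yes" if $t\ge\mathcal{A}(\vec{w})\cdot\vec{w}$ and otherwise outputs the violated hyperplane $t'\ge\mathcal{A}(\vec{w})\cdot\vec{w}'$ (in the variables $(\vec{w}',t')$). If this inner ellipsoid run outputs "infeasible", $WSO(\vec{\pi})=$"yes"; if it finds a feasible point $(t^*,\vec{w}^* )$, $WSO$ outputs the violated hyperplane $\vec{w}^*\cdot\vec{\pi}'\le t^*$ (in the variable $\vec{\pi}'$). *)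

theory Defs
  imports "HOL-Analysis.Analysis"
begin

definition cube :: "(real^'n) set" where
  "cube = {w. \<forall>i. \<bar>w $ i\<bar> \<le> 1}"

text \<open>One step of the standard (central-cut) ellipsoid method in R^m, m = CARD('m).
  The ellipsoid is {x. (x - c)^T M^{-1} (x - c) \<le> 1}, given by its centre c and
  positive definite matrix M; the cut is a . x \<le> a . c (a violated hyperplane a . x \<le> b).\<close>
definition ell_update :: "real^'m \<Rightarrow> ((real^'m) \<times> (real^'m^'m)) \<Rightarrow> ((real^'m) \<times> (real^'m^'m))" where
  "ell_update a E = (let c = fst E; M = snd E; m = real CARD('m);
      b = (1 / sqrt (a \<bullet> (M *v a))) *\<^sub>R (M *v a)
    in (c - (1 / (m + 1)) *\<^sub>R b,
        (m^2 / (m^2 - 1)) *\<^sub>R (M - (2 / (m + 1)) *\<^sub>R (\<chi> i j. b $ i * b $ j))))"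

text \<open>Running the ellipsoid algorithm with a (possibly weird) separation oracle for
  n iterations: the oracle returns None ("yes") or Some a (normal of a violated hyperplane).
  Result: Some x = feasible point found, None = "infeasible".\<close>
fun ell_run :: "(real^'m \<Rightarrow> (real^'m) option) \<Rightarrow> nat \<Rightarrow> ((real^'m) \<times> (real^'m^'m)) \<Rightarrow> (real^'m) option" where
  "ell_run orc 0 E = None"
| "ell_run orc (Suc n) E = (case orc (fst E) of
      None \<Rightarrow> Some (fst E)
    | Some a \<Rightarrow> ell_run orc n (ell_update a E))"

text \<open>Inner problem variables (w,t) are encoded as a vector indexed by 'n option:
  component Some i is w_i, component None is t.\<close>
definition w_of :: "real^('n::finite option) \<Rightarrow> real^'n" where
  "w_of v = (\<chi> i. v $ Some i)"

definition t_of :: "real^('n::finite option) \<Rightarrow> real" where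
  "t_of v = v $ None"

definition mk_wt :: "real^('n::finite) \<Rightarrow> real \<Rightarrow> real^('n option)" where
  "mk_wt w t = (\<chi> j. case j of None \<Rightarrow> t | Some i \<Rightarrow> w $ i)"

text \<open>The weird oracle \<open>\<widehat>WSO\<close>(w,t): "yes" iff t \<ge> A(w).w, otherwise the violated
  hyperplane t' \<ge> A(w).w', i.e. A(w).w' - t' \<le> 0, with normal (A(w), -1).\<close>
definition wso_hat :: "(real^('n::finite) \<Rightarrow> real^'n) \<Rightarrow> real^('n option) \<Rightarrow> (real^('n option)) option" where
  "wso_hat alg v = (if t_of v \<ge> alg (w_of v) \<bullet> w_of v then None
                     else Some (mk_wt (alg (w_of v)) (-1)))"

definition inner_oracle :: "(real^('n::finite) \<Rightarrow> real^'n) \<Rightarrow> real \<Rightarrow> real^'n \<Rightarrow> real^('n option) \<Rightarrow> (real^('n option)) option" where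
  "inner_oracle alg \<delta> \<pi> v =
     (if \<exists>i. w_of v $ i > 1 then Some (axis (Some (SOME i. w_of v $ i > 1)) 1)
      else if \<exists>i. w_of v $ i < -1 then Some (axis (Some (SOME i. w_of v $ i < -1)) (-1))
      else if t_of v - \<pi> \<bullet> w_of v > -\<delta> then Some (mk_wt (-\<pi>) 1)
      else wso_hat alg v)"

text \<open>The oracle WSO(\<pi>): None = "yes"; Some (w*, t*) = the violated hyperplane
  w* . \<pi>' \<le> t*. E0 \<pi> is the initial ellipsoid of the inner run, N the number of iterations.\<close>
definition WSO :: "(real^('n::finite) \<Rightarrow> real^'n) \<Rightarrow> real \<Rightarrow> nat \<Rightarrow>
    (real^'n \<Rightarrow> (real^('n option)) \<times> (real^('n option)^('n option))) \<Rightarrow> real^'n \<Rightarrow> ((real^'n) \<times> real) option" where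
  "WSO alg \<delta> N E0 \<pi> = (case ell_run (inner_oracle alg \<delta> \<pi>) N (E0 \<pi>) of
      None \<Rightarrow> None
    | Some v \<Rightarrow> Some (w_of v, t_of v))"

definition P1 :: "(real^'n \<Rightarrow> real^'n) \<Rightarrow> (real^'n) set" where
  "P1 alg = {\<pi>. \<forall>w\<in>cube. \<pi> \<bullet> w \<le> alg w \<bullet> w}"

end

theory Submission
  imports Defs
begin

text \<open>A hyperplane output by WSO is a point (w*, t*) that the inner ellipsoid run accepted,
  so w* lies in the cube and t* \<ge> A(w*) \<cdot> w*. Every \<pi> \<in> P1 then satisfies
  w* \<cdot> \<pi> \<le> A(w*) \<cdot> w* \<le> t*.\<close>

lemma ell_run_Some_imp_accepted:
  assumes "ell_run orc n E = Some v"
  shows "orc v = None"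
  using assms
proof (induction n arbitrary: E)
  case 0
  then show ?case by simp
next
  case (Suc n)
  then show ?case by (auto split: option.splits)
qed

lemma inner_oracle_None_imp:
  assumes "inner_oracle alg \<delta> \<pi> v = None"
  shows "w_of v \<in> cube" and "alg (w_of v) \<bullet> w_of v \<le> t_of v"
proof -
  have "\<forall>i. w_of v $ i \<le> 1" "\<forall>i. w_of v $ i \<ge> -1" and accepted: "wso_hat alg v = None"
    using assms unfolding inner_oracle_def by (auto simp: not_less split: if_splits)
  then show "w_of v \<in> cube"
    unfolding cube_def by (simp add: abs_le_iff)
  from accepted show "alg (w_of v) \<bullet> w_of v \<le> t_of v"
    unfolding wso_hat_def by (auto split: if_splits)
qed

lemma WSO_Some_imp:
  assumes "WSO alg \<delta> N E0 \<pi> = Some (w, t)"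
  shows "w \<in> cube" and "alg w \<bullet> w \<le> t"
proof -
  obtain v where run: "ell_run (inner_oracle alg \<delta> \<pi>) N (E0 \<pi>) = Some v"
    and "w = w_of v" "t = t_of v"
    using assms unfolding WSO_def by (auto split: option.splits)
  with inner_oracle_None_imp[OF ell_run_Some_imp_accepted[OF run]]
  show "w \<in> cube" and "alg w \<bullet> w \<le> t"
    by simp_all
qed

lemma P1_satisfies_WSO_cut:
  assumes "p \<in> P1 alg" and "WSO alg \<delta> N E0 \<pi> = Some (w, t)"
  shows "w \<bullet> p \<le> t"
proof -
  have "p \<bullet> w \<le> alg w \<bullet> w"
    using assms(1) WSO_Some_imp(1)[OF assms(2)] unfolding P1_def by blast
  then have "w \<bullet> p \<le> alg w \<bullet> w"
    by (simp only: inner_commute)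
  also have "\<dots> \<le> t"
    using WSO_Some_imp(2)[OF assms(2)] .
  finally show ?thesis .
qed

theorem fact1:
  fixes P :: "(real^'n) set" and \<alpha> :: real and alg :: "real^'n \<Rightarrow> real^'n"
    and \<delta> :: real and N :: nat
    and E0 :: "real^'n \<Rightarrow> (real^('n option)) \<times> (real^('n option)^('n option))"
    and queries :: "(real^'n) list"
  assumes "polytope P" and "convex P" and "aff_dim P = int CARD('n)"
    and "P \<subseteq> cube" and "0 \<in> P"
    and "\<alpha> \<le> 1"
    and "\<And>w. alg w \<in> P \<and> alg w \<bullet> w \<ge> \<alpha> * (SUP x\<in>P. x \<bullet> w)"
    and "\<delta> > 0"
  shows "P1 alg \<subseteq> (\<Inter>\<pi>\<in>set queries. case WSO alg \<delta> N E0 \<pi> of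
                        None \<Rightarrow> UNIV
                      | Some (w, t) \<Rightarrow> {\<pi>'. w \<bullet> \<pi>' \<le> t})"
  by (auto split: option.splits intro: P1_satisfies_WSO_cut)

end
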